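(* Let $X = \{x\in\mathbb{R}^n_+ : A_x x \ge b_x\}$ and $Y = \{y\in\mathbb{R}^m_+ : A_y y\ge b_y\}$, and $Q\in\mathbb{R}^{n\times m}_{\ge 0}$. Assume $\min\{c^\top x + d^\top y : x = Qy,\ x\in X,\ y\in Y\}$ has a finite optimal value. Let $(\hat\gamma,\hat\nu)$ be an optimal solution of $$\max_{\gamma,\nu}\{\gamma^\top b_x + \nu^\top b_y : Q^\top A_x^\top\gamma + A_y^\top\nu \le Q^\top c + d,\ \gamma\ge 0,\ \nu\ge 0\}$$ (the dual of $\min\{(Q^\top c + d)^\top y : A_x Q y\ge b_x,\ A_y y\ge b_y,\ y\ge 0\}$), and set $\hat\alpha := c - A_x^\top\hat\gamma$. Then $\hat\alpha$ is an optimal solution of $$\max_{\alpha\in\mathbb{R}^n}\{\sigma_X(c - \alpha) + \sigma_Y(Q^\top\alpha + d)\}.$$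
   Context: For $\mathcal{X}\subseteq\mathbb{R}^k$, $\sigma_{\mathcal{X}}(\alpha) := \inf_{x\in\mathcal{X}}\alpha^\top x$. $c\in\mathbb{R}^n$, $d\in\mathbb{R}^m$, and $A_x, b_x, A_y, b_y$ are matrices/vectors of compatible dimensions. *)

theory Defs
  imports "HOL-Analysis.Analysis"
begin

text \<open>Support-type function: sigma_X(alpha) = inf over x in X of alpha^T x, valued in the
extended reals (it may be -infinity; it is +infinity for empty X).\<close>
definition sigma :: "(real ^ 'k) set \<Rightarrow> real ^ 'k \<Rightarrow> ereal" where
  "sigma S a = (INF x\<in>S. ereal (a \<bullet> x))"

definition vle :: "real ^ 'k \<Rightarrow> real ^ 'k \<Rightarrow> bool" where
  "vle u v \<longleftrightarrow> (\<forall>i. u $ i \<le> v $ i)"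

definition polyh :: "real ^ 'n ^ 'p \<Rightarrow> real ^ 'p \<Rightarrow> (real ^ 'n) set" where
  "polyh A b = {x. vle 0 x \<and> vle b (A *v x)}"

end

theory Submission
  imports Defs
begin

(* For every alpha and every coupled feasible pair (Q y, y) we have
   (c - alpha)^T Q y + (Q^T alpha + d)^T y = c^T Q y + d^T y, so the decomposed objective is
   bounded by the coupled optimal value.  That value is the optimum of an LP in y alone, hence by
   LP strong duality (Farkas' lemma, via separation from a finitely generated cone) it is at most
   the dual value of (gamma, nu).  At alpha = c - A_x^T gamma the dual constraints split into
   gamma^T b_x <= sigma_X(A_x^T gamma) and nu^T b_y <= sigma_Y(Q^T alpha + d), so alpha attains
   the bound. *)

lemma vle_inner_mono:
  assumes "vle 0 g" and "vle u v"
  shows "g \<bullet> u \<le> g \<bullet> v"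
  using assms unfolding vle_def inner_vec_def by (auto intro!: sum_mono mult_left_mono)

lemma vle_nonneg_matrix_vector:
  assumes "\<forall>i j. 0 \<le> Q $ i $ j" and "vle 0 y"
  shows "vle 0 (Q *v y)"
  using assms unfolding vle_def by (auto simp: matrix_vector_mult_def intro!: sum_nonneg)

lemma vle_zero_axis: "vle 0 (axis i (1::real))"
  by (simp add: vle_def axis_def)

lemma farkas_finite_cone:
  fixes G :: "'a::euclidean_space set"
  assumes "finite G" and "z \<notin> convex_cone hull G"
  obtains a where "a \<bullet> z < 0" and "\<And>x. x \<in> G \<Longrightarrow> 0 \<le> a \<bullet> x"
proof -
  let ?S = "convex_cone hull G"
  obtain a \<beta> where sep_z: "a \<bullet> z < \<beta>" and sep_S: "\<And>x. x \<in> ?S \<Longrightarrow> \<beta> < a \<bullet> x"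
    using separating_hyperplane_closed_point[OF convex_convex_cone_hull
        closed_convex_cone_hull[OF \<open>finite G\<close>] assms(2)] by blast
  have "\<beta> < 0"
    using sep_S[OF convex_cone_hull_contains_0] by simp
  moreover have "0 \<le> a \<bullet> x" if "x \<in> G" for x
  proof (rule ccontr)
    assume neg: "\<not> 0 \<le> a \<bullet> x"
    \<comment> \<open>the cone contains a multiple of x whose value under a is 2 \<beta> < \<beta>\<close>
    define t where "t = 2 * \<beta> / (a \<bullet> x)"
    have "0 \<le> t"
      using neg \<open>\<beta> < 0\<close> by (simp add: t_def divide_nonpos_neg)
    then have "t *\<^sub>R x \<in> ?S"
      by (simp add: convex_cone_hull_mul hull_inc that)
    with sep_S have "\<beta> < a \<bullet> (t *\<^sub>R x)" by blast
    also have "a \<bullet> (t *\<^sub>R x) = 2 * \<beta>"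
      using neg by (simp add: t_def)
    finally show False
      using \<open>\<beta> < 0\<close> by simp
  qed
  ultimately show ?thesis
    using that sep_z by force
qed

(* The convex cone spanned by these generators consists of the pairs (A^T g + s, g^T b - t)
   with g, s, t >= 0, i.e. of the pairs dominated by the data of a dual feasible point. *)
definition lp_dual_generators :: "real ^ 'n ^ 'm \<Rightarrow> real ^ 'm \<Rightarrow> ((real ^ 'n) \<times> real) set" where
  "lp_dual_generators A b =
     range (\<lambda>i. (transpose A *v axis i 1, b $ i)) \<union> range (\<lambda>j. (axis j 1, 0)) \<union> {(0, -1)}"

lemma finite_lp_dual_generators: "finite (lp_dual_generators A b)"
  by (simp add: lp_dual_generators_def)

lemma lp_dual_feasible_if_mem_cone_hull:
  assumes "(w, P) \<in> convex_cone hull lp_dual_generators A b"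
  shows "\<exists>g. vle 0 g \<and> vle (transpose A *v g) w \<and> P \<le> g \<bullet> b"
proof -
  define C where "C = {(w, P). \<exists>g. vle 0 g \<and> vle (transpose A *v g) w \<and> P \<le> g \<bullet> b}"
  have "convex_cone C"
    unfolding convex_cone_iff
  proof (intro conjI ballI allI impI)
    show "0 \<in> C"
      unfolding C_def zero_prod_def by (auto simp: vle_def intro!: exI[of _ 0])
  next
    fix x y assume "x \<in> C" "y \<in> C"
    then obtain g h where "vle 0 g" "vle (transpose A *v g) (fst x)" "snd x \<le> g \<bullet> b"
      "vle 0 h" "vle (transpose A *v h) (fst y)" "snd y \<le> h \<bullet> b"
      unfolding C_def by auto
    then show "x + y \<in> C"
      unfolding C_def
      by (cases x, cases y)
         (auto simp: vle_def matrix_vector_right_distrib inner_add_left simp del: transpose_matrix_vector intro!: exI[of _ "g + h"] add_mono)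
  next
    fix x and t :: real assume "x \<in> C" "0 \<le> t"
    then obtain g where "vle 0 g" "vle (transpose A *v g) (fst x)" "snd x \<le> g \<bullet> b"
      unfolding C_def by auto
    with \<open>0 \<le> t\<close> show "t *\<^sub>R x \<in> C"
      unfolding C_def
      by (cases x)
         (auto simp: vle_def matrix_vector_mult_scaleR simp del: transpose_matrix_vector intro!: exI[of _ "t *\<^sub>R g"] mult_left_mono)
  qed
  moreover have "lp_dual_generators A b \<subseteq> C"
  proof -
    have "(transpose A *v axis i 1, b $ i) \<in> C" for i
      unfolding C_def using vle_zero_axis[of i]
      by (auto simp: vle_def inner_axis' intro!: exI[of _ "axis i 1"])
    moreover have "(axis j 1, 0) \<in> C" for j
      unfolding C_def using vle_zero_axis[of j] by (auto simp: vle_def intro!: exI[of _ 0])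
    moreover have "(0, -1) \<in> C"
      unfolding C_def by (auto simp: vle_def intro!: exI[of _ 0])
    ultimately show ?thesis
      unfolding lp_dual_generators_def by auto
  qed
  ultimately show ?thesis
    using assms hull_minimal[of _ C convex_cone] unfolding C_def by blast
qed

lemma lp_bounded_imp_recession_nonneg:
  assumes lower: "\<And>y. vle 0 y \<Longrightarrow> vle b (A *v y) \<Longrightarrow> P \<le> w \<bullet> y"
    and feasible: "vle 0 y0" "vle b (A *v y0)"
    and recession: "vle 0 r" "vle 0 (A *v r)"
  shows "0 \<le> w \<bullet> r"
proof (rule ccontr)
  assume "\<not> 0 \<le> w \<bullet> r"
  then have descent: "w \<bullet> r < 0" by simp
  define t where "t = (w \<bullet> y0 - P + 1) / - (w \<bullet> r)"
  have "P \<le> w \<bullet> y0"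
    using lower feasible .
  with descent have "0 \<le> t"
    by (simp add: t_def divide_nonneg_neg)
  with feasible recession have "P \<le> w \<bullet> (y0 + t *\<^sub>R r)"
    by (intro lower) (auto simp: vle_def matrix_vector_right_distrib
        matrix_vector_mult_scaleR add_increasing2)
  also have "\<dots> = w \<bullet> y0 + t * (w \<bullet> r)"
    by (simp add: inner_add_right)
  also have "\<dots> = P - 1"
    using descent by (simp add: t_def)
  finally show False by simp
qed

lemma lp_strong_duality:
  fixes A :: "real ^ 'n ^ 'm"
  assumes lower: "\<And>y. vle 0 y \<Longrightarrow> vle b (A *v y) \<Longrightarrow> P \<le> w \<bullet> y"
    and feasible: "vle 0 y0" "vle b (A *v y0)"
  obtains g where "vle 0 g" "vle (transpose A *v g) w" "P \<le> g \<bullet> b"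
proof (cases "(w, P) \<in> convex_cone hull lp_dual_generators A b")
  case True
  then show ?thesis
    using lp_dual_feasible_if_mem_cone_hull that by blast
next
  case False
  obtain a where sep: "a \<bullet> (w, P) < 0"
    and gens: "\<And>x. x \<in> lp_dual_generators A b \<Longrightarrow> 0 \<le> a \<bullet> x"
    using farkas_finite_cone[OF finite_lp_dual_generators False] by blast
  obtain y l where a: "a = (y, l)"
    by (cases a)
  have "0 \<le> y $ j" for j
    using gens[of "(axis j 1, 0)"] by (simp add: a lp_dual_generators_def inner_axis)
  then have y_nonneg: "vle 0 y"
    by (simp add: vle_def)
  have "l \<le> 0"
    using gens[of "(0, -1)"] by (simp add: a lp_dual_generators_def)
  have rows: "- l * b $ i \<le> (A *v y) $ i" for i
    using gens[of "(transpose A *v axis i 1, b $ i)"]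
    by (simp add: a lp_dual_generators_def inner_commute[of y] dot_lmul_matrix inner_axis')
  show ?thesis
  proof (cases "l = 0")
    case True
    have "vle 0 (A *v y)"
      using rows by (simp add: vle_def True)
    with lower feasible y_nonneg have "0 \<le> w \<bullet> y"
      by (rule lp_bounded_imp_recession_nonneg)
    with sep True show ?thesis
      by (simp add: a inner_commute)
  next
    case False
    define s where "s = - l"
    with False \<open>l \<le> 0\<close> have "0 < s" and l: "l = - s"
      by auto
    \<comment> \<open>then y / s is a primal feasible point with value below P\<close>
    define y' where "y' = (1 / s) *\<^sub>R y"
    have "vle 0 y'"
      using y_nonneg \<open>0 < s\<close> by (simp add: vle_def y'_def)
    moreover have "b $ i \<le> (A *v y') $ i" for i
      using rows[of i] \<open>0 < s\<close>
      by (simp add: l y'_def matrix_vector_mult_scaleR pos_le_divide_eq mult.commute)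
    then have "vle b (A *v y')"
      by (simp add: vle_def)
    ultimately have "P \<le> w \<bullet> y'"
      by (rule lower)
    then have "P * s \<le> y \<bullet> w"
      using \<open>0 < s\<close> by (simp add: y'_def inner_commute pos_le_divide_eq)
    with sep show ?thesis
      by (simp add: a l mult.commute)
  qed
qed

definition vec_append :: "'a ^ 'p \<Rightarrow> 'a ^ 'q \<Rightarrow> 'a ^ ('p + 'q)" where
  "vec_append u v = (\<chi> i. case_sum (($) u) (($) v) i)"

lemma vec_append_nth [simp]:
  "vec_append u v $ Inl i = u $ i"
  "vec_append u v $ Inr j = v $ j"
  by (simp_all add: vec_append_def)

lemma vec_append_zero [simp]: "vec_append 0 0 = 0"
  by (simp add: vec_eq_iff vec_append_def split: sum.split)

lemma vec_append_split: "z = vec_append (\<chi> i. z $ Inl i) (\<chi> j. z $ Inr j)"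
  by (simp add: vec_eq_iff vec_append_def split: sum.split)

lemma sum_UNIV_sum_type:
  "(\<Sum>k\<in>UNIV. f k) = (\<Sum>i\<in>UNIV. f (Inl i)) + (\<Sum>j\<in>UNIV. f (Inr j))"
  for f :: "'p::finite + 'q::finite \<Rightarrow> 'a::comm_monoid_add"
  using sum.Plus[of "UNIV :: 'p set" "UNIV :: 'q set" f] by (simp add: comp_def)

lemma vle_vec_append_iff [simp]:
  "vle (vec_append u v) (vec_append u' v') \<longleftrightarrow> vle u u' \<and> vle v v'"
  by (auto simp: vle_def vec_append_def split: sum.split)

lemma vec_append_matrix_vector_mult:
  "vec_append A B *v x = vec_append (A *v x) (B *v x)"
  by (simp add: vec_eq_iff vec_append_def matrix_vector_mult_def split: sum.split)

lemma inner_vec_append: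
  "vec_append u v \<bullet> vec_append u' v' = u \<bullet> u' + v \<bullet> v'"
  by (simp add: inner_vec_def sum_UNIV_sum_type)

lemma transpose_vec_append_mult:
  fixes A :: "real ^ 'n ^ 'p" and B :: "real ^ 'n ^ 'q" and g :: "real ^ 'p" and h :: "real ^ 'q"
  shows "transpose (vec_append A B) *v vec_append g h = transpose A *v g + transpose B *v h"
  by (simp add: vec_eq_iff vector_matrix_mult_def sum_UNIV_sum_type)

lemma sigma_polyh_lower_bound:
  assumes "vle 0 g" and "vle 0 s"
  shows "ereal (g \<bullet> b) \<le> sigma (polyh A b) (transpose A *v g + s)"
  unfolding sigma_def
proof (rule INF_greatest)
  fix x assume "x \<in> polyh A b"
  then have "vle 0 x" and "vle b (A *v x)"
    by (simp_all add: polyh_def)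
  have "g \<bullet> b \<le> g \<bullet> (A *v x)"
    using \<open>vle 0 g\<close> \<open>vle b (A *v x)\<close> by (rule vle_inner_mono)
  also have "\<dots> \<le> g \<bullet> (A *v x) + s \<bullet> x"
    using vle_inner_mono[OF \<open>vle 0 s\<close> \<open>vle 0 x\<close>] by simp
  also have "\<dots> = (transpose A *v g + s) \<bullet> x"
    by (simp add: inner_add_left dot_lmul_matrix)
  finally show "ereal (g \<bullet> b) \<le> ereal ((transpose A *v g + s) \<bullet> x)"
    by simp
qed

lemma sigma_add_le_coupled_INF:
  fixes Q :: "real ^ 'm ^ 'n"
  shows "sigma X (c - \<alpha>) + sigma Y (transpose Q *v \<alpha> + d)
    \<le> (INF z\<in>{(x, y). x = Q *v y \<and> x \<in> X \<and> y \<in> Y}. ereal (c \<bullet> fst z + d \<bullet> snd z))"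
proof (rule INF_greatest)
  fix z assume "z \<in> {(x, y). x = Q *v y \<and> x \<in> X \<and> y \<in> Y}"
  then obtain y where z: "z = (Q *v y, y)" and "Q *v y \<in> X" and "y \<in> Y"
    by auto
  then have "sigma X (c - \<alpha>) + sigma Y (transpose Q *v \<alpha> + d)
      \<le> ereal ((c - \<alpha>) \<bullet> (Q *v y)) + ereal ((transpose Q *v \<alpha> + d) \<bullet> y)"
    unfolding sigma_def by (intro add_mono INF_lower)
  also have "\<dots> = ereal (c \<bullet> fst z + d \<bullet> snd z)"
    by (simp add: z inner_diff_left inner_add_left dot_lmul_matrix)
  finally show "sigma X (c - \<alpha>) + sigma Y (transpose Q *v \<alpha> + d) \<le> ereal (c \<bullet> fst z + d \<bullet> snd z)" .
qed

lemma coupled_lp_value_le_dual_bound: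
  fixes Ax :: "real ^ 'n ^ 'p" and b_x :: "real ^ 'p" and Ay :: "real ^ 'm ^ 'q" and b_y :: "real ^ 'q"
    and Q :: "real ^ 'm ^ 'n"
  defines "F \<equiv> {(x, y). x = Q *v y \<and> x \<in> polyh Ax b_x \<and> y \<in> polyh Ay b_y}"
  assumes Q_nonneg: "\<forall>i j. 0 \<le> Q $ i $ j"
    and finite_value: "\<bar>INF z\<in>F. ereal (c \<bullet> fst z + d \<bullet> snd z)\<bar> \<noteq> \<infinity>"
    and dual_bound: "\<And>g h. vle (transpose Q *v (transpose Ax *v g) + transpose Ay *v h)
        (transpose Q *v c + d) \<Longrightarrow> vle 0 g \<Longrightarrow> vle 0 h \<Longrightarrow> g \<bullet> b_x + h \<bullet> b_y \<le> D"
  shows "(INF z\<in>F. ereal (c \<bullet> fst z + d \<bullet> snd z)) \<le> ereal D"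
proof -
  define A where "A = vec_append (Ax ** Q) Ay"
  define w where "w = transpose Q *v c + d"
  obtain P where primal_value: "(INF z\<in>F. ereal (c \<bullet> fst z + d \<bullet> snd z)) = ereal P"
    using finite_value by (cases "INF z\<in>F. ereal (c \<bullet> fst z + d \<bullet> snd z)") auto
  then have "F \<noteq> {}"
    by (auto simp: top_ereal_def)
  then obtain y0 where "(Q *v y0, y0) \<in> F"
    unfolding F_def by auto
  have F_iff: "(Q *v y, y) \<in> F \<longleftrightarrow> vle 0 y \<and> vle (vec_append b_x b_y) (A *v y)" for y
    using vle_nonneg_matrix_vector[OF Q_nonneg, of y]
    by (auto simp: F_def A_def polyh_def vec_append_matrix_vector_mult matrix_vector_mul_assoc)
  have lower: "P \<le> w \<bullet> y" if "vle 0 y" and "vle (vec_append b_x b_y) (A *v y)" for y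
  proof -
    from that have "(INF z\<in>F. ereal (c \<bullet> fst z + d \<bullet> snd z)) \<le> ereal (c \<bullet> (Q *v y) + d \<bullet> y)"
      by (intro INF_lower2[of "(Q *v y, y)"]) (simp_all add: F_iff)
    then show ?thesis
      by (simp add: primal_value w_def inner_add_left dot_lmul_matrix)
  qed
  have "vle 0 y0" and "vle (vec_append b_x b_y) (A *v y0)"
    using \<open>(Q *v y0, y0) \<in> F\<close> F_iff by simp_all
  then obtain g where g_dual: "vle 0 g" "vle (transpose A *v g) w" "P \<le> g \<bullet> vec_append b_x b_y"
    using lp_strong_duality[OF lower] by blast
  obtain gx gy where g: "g = vec_append gx gy"
    using vec_append_split by blast
  have "transpose A *v g = transpose Q *v (transpose Ax *v gx) + transpose Ay *v gy"
    by (simp only: g A_def transpose_vec_append_mult matrix_transpose_mul matrix_vector_mul_assoc)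
  moreover have "vle 0 gx" and "vle 0 gy"
    using g_dual(1) vle_vec_append_iff[of 0 0 gx gy] by (simp_all add: g)
  ultimately have "gx \<bullet> b_x + gy \<bullet> b_y \<le> D"
    using g_dual(2) by (intro dual_bound) (simp_all add: w_def)
  with g_dual(3) have "P \<le> D"
    by (simp add: g inner_vec_append)
  then show ?thesis
    by (simp add: primal_value)
qed

lemma dual_value_le_decomposed_objective:
  fixes Ax :: "real ^ 'n ^ 'p" and Ay :: "real ^ 'm ^ 'q" and Q :: "real ^ 'm ^ 'n"
  assumes "vle (transpose Q *v (transpose Ax *v g) + transpose Ay *v h) (transpose Q *v c + d)"
    and "vle 0 g" and "vle 0 h"
  shows "ereal (g \<bullet> b_x + h \<bullet> b_y)
    \<le> sigma (polyh Ax b_x) (c - (c - transpose Ax *v g))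
      + sigma (polyh Ay b_y) (transpose Q *v (c - transpose Ax *v g) + d)"
proof -
  define slack where
    "slack = (transpose Q *v c + d) - (transpose Q *v (transpose Ax *v g) + transpose Ay *v h)"
  have "vle 0 slack"
    using assms(1) by (simp add: slack_def vle_def)
  have Y_direction: "transpose Q *v (c - transpose Ax *v g) + d = transpose Ay *v h + slack"
    by (simp add: slack_def matrix_vector_mult_diff_distrib algebra_simps)
  have "ereal (g \<bullet> b_x) \<le> sigma (polyh Ax b_x) (c - (c - transpose Ax *v g))"
    using sigma_polyh_lower_bound[OF \<open>vle 0 g\<close>, of 0] by (simp add: vle_def)
  moreover have "ereal (h \<bullet> b_y) \<le> sigma (polyh Ay b_y) (transpose Q *v (c - transpose Ax *v g) + d)"
    unfolding Y_direction by (rule sigma_polyh_lower_bound[OF \<open>vle 0 h\<close> \<open>vle 0 slack\<close>])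
  ultimately show ?thesis
    by (metis add_mono plus_ereal.simps(1))
qed

theorem mainTheorem9:
  fixes Ax :: "real ^ 'n ^ 'p" and b_x :: "real ^ 'p"
    and Ay :: "real ^ 'm ^ 'q" and b_y :: "real ^ 'q"
    and Q :: "real ^ 'm ^ 'n" and c :: "real ^ 'n" and d :: "real ^ 'm"
    and gh :: "real ^ 'p" and nh :: "real ^ 'q"
  assumes Qnonneg: "\<forall>i j. Q $ i $ j \<ge> 0"
    and finite_val: "\<bar>INF z\<in>{(x, y). x = Q *v y \<and> x \<in> polyh Ax b_x \<and> y \<in> polyh Ay b_y}.
                        ereal (c \<bullet> fst z + d \<bullet> snd z)\<bar> \<noteq> \<infinity>"
    and dual_feas: "vle (transpose Q *v (transpose Ax *v gh) + transpose Ay *v nh)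
                        (transpose Q *v c + d)" "vle 0 gh" "vle 0 nh"
    and dual_opt: "\<forall>g n. vle (transpose Q *v (transpose Ax *v g) + transpose Ay *v n)
                        (transpose Q *v c + d) \<and> vle 0 g \<and> vle 0 n
                      \<longrightarrow> g \<bullet> b_x + n \<bullet> b_y \<le> gh \<bullet> b_x + nh \<bullet> b_y"
  shows "\<forall>\<alpha>. sigma (polyh Ax b_x) (c - \<alpha>) + sigma (polyh Ay b_y) (transpose Q *v \<alpha> + d)
            \<le> sigma (polyh Ax b_x) (c - (c - transpose Ax *v gh))
               + sigma (polyh Ay b_y) (transpose Q *v (c - transpose Ax *v gh) + d)"
proof (intro allI)
  fix \<alpha> :: "real ^ 'n"
  have "sigma (polyh Ax b_x) (c - \<alpha>) + sigma (polyh Ay b_y) (transpose Q *v \<alpha> + d)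
      \<le> (INF z\<in>{(x, y). x = Q *v y \<and> x \<in> polyh Ax b_x \<and> y \<in> polyh Ay b_y}.
            ereal (c \<bullet> fst z + d \<bullet> snd z))"
    by (rule sigma_add_le_coupled_INF)
  also have "\<dots> \<le> ereal (gh \<bullet> b_x + nh \<bullet> b_y)"
    using Qnonneg finite_val dual_opt by (intro coupled_lp_value_le_dual_bound) blast+
  also have "\<dots> \<le> sigma (polyh Ax b_x) (c - (c - transpose Ax *v gh))
      + sigma (polyh Ay b_y) (transpose Q *v (c - transpose Ax *v gh) + d)"
    using dual_feas by (rule dual_value_le_decomposed_objective)
  finally show "sigma (polyh Ax b_x) (c - \<alpha>) + sigma (polyh Ay b_y) (transpose Q *v \<alpha> + d)
      \<le> sigma (polyh Ax b_x) (c - (c - transpose Ax *v gh))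
        + sigma (polyh Ay b_y) (transpose Q *v (c - transpose Ax *v gh) + d)" .
qed

end
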